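(* For every positive integer $n$, $$\tilde{R}(\dot Q_2^{(brbb)},Q_n)=\tilde{R}(\dot Q_2^{(brrb)},Q_n)=\tilde{R}(\dot Q_2^{(rrbb)},Q_n)=2n,$$ and $$2n\le \tilde{R}(\dot Q_2^{(rbbb)},Q_n)\le 2n+O\!\left(\tfrac{n}{\log n}\right).$$
   Context: $Q_N$ is the Boolean lattice of all subsets of an $N$-element set ordered by inclusion. $Q_2$ has vertices $\varnothing,\{1\},\{2\},\{1,2\}$. The colored posets are: $\dot Q_2^{(brbb)}$: minimum $\varnothing$ blue, one middle vertex red, the other middle vertex blue, maximum blue; $\dot Q_2^{(brrb)}$: minimum blue, both middle vertices red, maximum blue; $\dot Q_2^{(rrbb)}$: minimum red, one middle vertex red, the other middle vertex blue, maximum blue; $\dot Q_2^{(rbbb)}$: minimum red, both middle vertices and the maximum blue. In a blue/red coloring of $Q_N$, a copy of a colored poset $\dot P$ is an induced subposet isomorphic to $P$ whose vertices have the colors of the corresponding vertices of $\dot P$. The poset Erdős–Hajnal number $\tilde{R}(\dot P,Q_n)$ is the minimum $N$ such that every blue/red coloring of $Q_N$ contains a copy of $\dot P$ or a monochromatic induced copy of $Q_n$. *)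

theory Defs
  imports Main "HOL-Library.Landau_Symbols"
begin

datatype color = Blue | Red

definition QN :: "nat \<Rightarrow> nat set set" where
  "QN N = Pow {0..<N}"

definition order_emb :: "nat \<Rightarrow> nat \<Rightarrow> (nat set \<Rightarrow> nat set) \<Rightarrow> bool" where
  "order_emb m N f \<longleftrightarrow> (\<forall>A\<in>QN m. f A \<in> QN N) \<and>
     (\<forall>A\<in>QN m. \<forall>B\<in>QN m. (A \<subseteq> B \<longleftrightarrow> f A \<subseteq> f B))"

text \<open>Colored versions of Q_2 (vertices {}, {0}, {1}, {0,1}).\<close>
definition Q2_brbb :: "nat set \<Rightarrow> color" where
  "Q2_brbb A = (if A = {0} then Red else Blue)"
definition Q2_brrb :: "nat set \<Rightarrow> color" where
  "Q2_brrb A = (if A = {0} \<or> A = {1} then Red else Blue)"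
definition Q2_rrbb :: "nat set \<Rightarrow> color" where
  "Q2_rrbb A = (if A = {} \<or> A = {0} then Red else Blue)"
definition Q2_rbbb :: "nat set \<Rightarrow> color" where
  "Q2_rbbb A = (if A = {} then Red else Blue)"

definition has_colored_copy :: "(nat set \<Rightarrow> color) \<Rightarrow> nat \<Rightarrow> (nat set \<Rightarrow> color) \<Rightarrow> bool" where
  "has_colored_copy pc N col \<longleftrightarrow>
     (\<exists>f. order_emb 2 N f \<and> (\<forall>A\<in>QN 2. col (f A) = pc A))"

definition has_mono_Qn :: "nat \<Rightarrow> nat \<Rightarrow> (nat set \<Rightarrow> color) \<Rightarrow> bool" where
  "has_mono_Qn n N col \<longleftrightarrow>
     (\<exists>f c. order_emb n N f \<and> (\<forall>A\<in>QN n. col (f A) = c))"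

definition EH_prop :: "(nat set \<Rightarrow> color) \<Rightarrow> nat \<Rightarrow> nat \<Rightarrow> bool" where
  "EH_prop pc n N \<longleftrightarrow> (\<forall>col. has_colored_copy pc N col \<or> has_mono_Qn n N col)"

definition EH_number :: "(nat set \<Rightarrow> color) \<Rightarrow> nat \<Rightarrow> nat" where
  "EH_number pc n = (LEAST N. EH_prop pc n N)"

end

(*
  Lower bounds: colour a set red iff it has at least n elements. Every pattern has a red
  vertex below a blue one, which this colouring forbids, and for N < 2n a copy of Q_n climbs
  n levels of Q_N and so meets both colours.

  Upper bounds: a monochromatic Q_n over a ground set Y is built as A |-> A \<union> \<phi> A, with \<phi>
  monotone and valued outside Y. For brbb, either such a red cube exists along a chain
  X_0 \<subseteq> ... \<subseteq> X_k outside Y, or there is a blue "staircase" B_0 \<subseteq> ... \<subseteq> B_k \<subseteq> Y with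
  R \<union> B_j \<union> X_j blue; the blue sets of a staircase together with a red set between them
  give the pattern. For brrb, two blue sets a \<subseteq> d differ in at most n points, which makes
  the choice of red extensions monotone. For rrbb, complementation combined with swapping
  colours preserves the pattern; a bad colouring would have only blue sets below the middle
  layer and, dually, only red sets above it, so {0..<n} spans a monochromatic cube. For
  rbbb, take a red R and one staircase for every ordering of a k-element set X; if
  k! > 2^n, two staircases share their top, and where the two orderings first differ they
  produce the pattern. Taking k of order n / log n gives the asymptotic bound.
*)
theory Submission
  imports Defs "HOL-Combinatorics.Multiset_Permutations"
begin

section \<open>Cubes and coloured copies of \<open>Q\<^sub>2\<close>\<close>

lemma color_neq_Blue [simp]: "c \<noteq> Blue \<longleftrightarrow> c = Red"
  and color_neq_Red [simp]: "c \<noteq> Red \<longleftrightarrow> c = Blue"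
  by (cases c; simp)+

lemma QN_2: "QN 2 = {{}, {0}, {1}, {0, 1}}"
proof -
  have "{0..<2::nat} = {0, 1}" by auto
  then show ?thesis unfolding QN_def by (simp add: Pow_insert insert_commute)
qed

lemma order_emb_iff:
  "order_emb m N f \<Longrightarrow> A \<in> QN m \<Longrightarrow> B \<in> QN m \<Longrightarrow> A \<subseteq> B \<longleftrightarrow> f A \<subseteq> f B"
  unfolding order_emb_def by blast

lemma order_emb_subset: "order_emb m N f \<Longrightarrow> A \<in> QN m \<Longrightarrow> f A \<subseteq> {0..<N}"
  unfolding order_emb_def QN_def by blast

lemma has_mono_Qn_of_embedding:
  fixes Z :: "'a set" and g :: "'a set \<Rightarrow> nat set"
  assumes "finite Z" "n \<le> card Z"
    and g_range: "\<And>A. A \<subseteq> Z \<Longrightarrow> g A \<subseteq> {0..<N}"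
    and g_emb: "\<And>A B. A \<subseteq> Z \<Longrightarrow> B \<subseteq> Z \<Longrightarrow> A \<subseteq> B \<longleftrightarrow> g A \<subseteq> g B"
    and g_col: "\<And>A. A \<subseteq> Z \<Longrightarrow> col (g A) = c"
  shows "has_mono_Qn n N col"
proof -
  obtain Z0 where Z0: "Z0 \<subseteq> Z" "card Z0 = n" "finite Z0"
    using obtain_subset_with_card_n[OF assms(2)] by blast
  obtain h where "bij_betw h {0..<n} Z0"
    using ex_bij_betw_nat_finite[OF Z0(3)] Z0(2) by auto
  then have h: "inj_on h {0..<n}" "h ` {0..<n} \<subseteq> Z"
    using Z0(1) by (auto simp: bij_betw_def)
  have hZ: "h ` A \<subseteq> Z" if "A \<in> QN n" for A
    using h(2) that by (auto simp: QN_def)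
  have "order_emb n N (\<lambda>A. g (h ` A))"
    unfolding order_emb_def
  proof (intro conjI ballI)
    fix A B assume A: "A \<in> QN n" and B: "B \<in> QN n"
    show "g (h ` A) \<in> QN N" using g_range[OF hZ[OF A]] by (simp add: QN_def)
    have "A \<subseteq> B \<longleftrightarrow> h ` A \<subseteq> h ` B"
      using h(1) A B unfolding inj_on_def QN_def by blast
    also have "\<dots> \<longleftrightarrow> g (h ` A) \<subseteq> g (h ` B)"
      using g_emb[OF hZ[OF A] hZ[OF B]] .
    finally show "A \<subseteq> B \<longleftrightarrow> g (h ` A) \<subseteq> g (h ` B)" .
  qed
  moreover have "\<forall>A\<in>QN n. col (g (h ` A)) = c"
    using g_col hZ by blast
  ultimately show ?thesis unfolding has_mono_Qn_def by blast
qed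

text \<open>\<open>A\<close> is recovered from \<open>A \<union> \<phi> A\<close> as its trace on \<open>Y\<close>, so monotonicity of \<open>\<phi>\<close>
  is all that is needed for an order embedding.\<close>
lemma has_mono_Qn_of_shift:
  assumes "finite Y" "n \<le> card Y"
    and \<phi>_mono: "\<And>A B. A \<subseteq> B \<Longrightarrow> B \<subseteq> Y \<Longrightarrow> \<phi> A \<subseteq> \<phi> B"
    and \<phi>_disj: "\<And>A. A \<subseteq> Y \<Longrightarrow> \<phi> A \<inter> Y = {}"
    and range: "\<And>A. A \<subseteq> Y \<Longrightarrow> A \<union> \<phi> A \<subseteq> {0..<N}"
    and colour: "\<And>A. A \<subseteq> Y \<Longrightarrow> col (A \<union> \<phi> A) = c"
  shows "has_mono_Qn n N col"
proof (rule has_mono_Qn_of_embedding[of Y n "\<lambda>A. A \<union> \<phi> A"])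
  show "A \<subseteq> B \<longleftrightarrow> A \<union> \<phi> A \<subseteq> B \<union> \<phi> B" if "A \<subseteq> Y" "B \<subseteq> Y" for A B
  proof
    assume "A \<subseteq> B"
    then show "A \<union> \<phi> A \<subseteq> B \<union> \<phi> B" using \<phi>_mono that by blast
  next
    assume "A \<union> \<phi> A \<subseteq> B \<union> \<phi> B"
    then have "(A \<union> \<phi> A) \<inter> Y \<subseteq> (B \<union> \<phi> B) \<inter> Y" by blast
    then show "A \<subseteq> B" using \<phi>_disj that by blast
  qed
qed (use assms in auto)

lemma has_mono_Qn_of_interval:
  assumes "a \<subseteq> d" "d \<subseteq> {0..<N}" "n \<le> card (d - a)"
    and "\<And>S. a \<subseteq> S \<Longrightarrow> S \<subseteq> d \<Longrightarrow> col S = c"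
  shows "has_mono_Qn n N col"
proof (rule has_mono_Qn_of_shift[where Y = "d - a" and \<phi> = "\<lambda>_. a" and c = c])
  show "finite (d - a)" using assms(2) finite_subset by blast
  show "col (A \<union> a) = c" if "A \<subseteq> d - a" for A using assms(1,4) that by blast
qed (use assms in auto)

lemma has_mono_Qn_of_down_closed:
  assumes "finite Y" "n \<le> card Y" "w \<notin> Y" "a \<inter> Y = {}" "a \<union> Y \<union> {w} \<subseteq> {0..<N}"
    and down: "\<And>A B. A \<subseteq> B \<Longrightarrow> B \<subseteq> Y \<Longrightarrow> P B \<Longrightarrow> P A"
    and colour_P: "\<And>A. A \<subseteq> Y \<Longrightarrow> P A \<Longrightarrow> col (a \<union> A) = c"
    and colour_not_P: "\<And>A. A \<subseteq> Y \<Longrightarrow> \<not> P A \<Longrightarrow> col (a \<union> A \<union> {w}) = c"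
  shows "has_mono_Qn n N col"
proof (rule has_mono_Qn_of_shift[of Y n "\<lambda>A. if P A then a else a \<union> {w}"])
  show "(if P A then a else a \<union> {w}) \<subseteq> (if P B then a else a \<union> {w})"
    if "A \<subseteq> B" "B \<subseteq> Y" for A B
    using down[OF that] by auto
  show "col (A \<union> (if P A then a else a \<union> {w})) = c" if "A \<subseteq> Y" for A
    using colour_P[OF that] colour_not_P[OF that] by (simp add: Un_ac)
qed (use assms in auto)

lemma has_mono_Q1:
  assumes "a \<subset> d" "d \<subseteq> {0..<N}" "col a = c" "col d = c"
  shows "has_mono_Qn 1 N col"
proof -
  obtain x where x: "x \<in> d" "x \<notin> a" using assms(1) by blast
  show ?thesis
  proof (rule has_mono_Qn_of_embedding[of "{x}" 1 "\<lambda>A. if A = {} then a else d"])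
    show "A \<subseteq> B \<longleftrightarrow> (if A = {} then a else d) \<subseteq> (if B = {} then a else d)"
      if "A \<subseteq> {x}" "B \<subseteq> {x}" for A B
      using that assms(1) by (auto simp: subset_singleton_iff)
  qed (use assms in auto)
qed

lemma card_compl_minus_point:
  assumes "a \<subseteq> {0..<N}" "w \<in> {0..<N} - a"
  shows "card ({0..<N} - a - {w}) = N - card a - 1"
proof -
  have "card ({0..<N} - a) = N - card a" using assms(1) by (simp add: card_Diff_subset finite_subset)
  then show ?thesis using assms(2) by (simp add: card_Diff_singleton)
qed

lemma has_colored_copy_of_sets:
  assumes "a \<subseteq> b" "a \<subseteq> c" "b \<subseteq> d" "c \<subseteq> d" "\<not> b \<subseteq> c" "\<not> c \<subseteq> b" "d \<subseteq> {0..<N}"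
    and "col a = pc {}" "col b = pc {0}" "col c = pc {1}" "col d = pc {0, 1}"
  shows "has_colored_copy pc N col"
proof -
  define f where "f A = (if A = {} then a else if A = {0} then b else if A = {1} then c else d)"
    for A :: "nat set"
  have f: "f {} = a" "f {0} = b" "f {Suc 0} = c" "f {0, Suc 0} = d"
    by (auto simp: f_def)
  have "order_emb 2 N f"
    unfolding order_emb_def QN_2 using assms(1-7) by (simp add: f QN_def) blast
  moreover have "\<forall>A\<in>QN 2. col (f A) = pc A"
    unfolding QN_2 using assms(8-11) f by auto
  ultimately show ?thesis unfolding has_colored_copy_def by blast
qed

section \<open>The lower bound\<close>

lemma card_order_emb_chain:
  assumes "order_emb n N f" "i \<le> n"
  shows "card (f {}) + i \<le> card (f {0..<i})"
  using assms(2)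
proof (induction i)
  case (Suc i)
  have A: "{0..<i} \<in> QN n" "{0..<Suc i} \<in> QN n" using Suc.prems by (auto simp: QN_def)
  have "f {0..<i} \<subset> f {0..<Suc i}"
    using order_emb_iff[OF assms(1) A] order_emb_iff[OF assms(1) A(2,1)] by auto
  moreover have "finite (f {0..<Suc i})"
    using order_emb_subset[OF assms(1) A(2)] finite_subset by blast
  ultimately have "card (f {0..<i}) < card (f {0..<Suc i})" by (rule psubset_card_mono[rotated])
  then show ?case using Suc by simp
qed simp

lemma not_EH_prop_below_double:
  assumes "N < 2 * n" "A \<in> QN 2" "B \<in> QN 2" "A \<subseteq> B" "pc A = Red" "pc B = Blue"
  shows "\<not> EH_prop pc n N"
proof -
  define col where "col S = (if n \<le> card S then Red else Blue)" for S :: "nat set"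
  have "\<not> has_colored_copy pc N col"
  proof
    assume "has_colored_copy pc N col"
    then obtain f where f: "order_emb 2 N f" "\<forall>X\<in>QN 2. col (f X) = pc X"
      unfolding has_colored_copy_def by blast
    have "card (f A) \<le> card (f B)"
      using order_emb_iff[OF f(1) assms(2,3)] order_emb_subset[OF f(1) assms(3)] assms(4)
      by (meson card_mono finite_atLeastLessThan finite_subset)
    moreover have "col (f A) = Red" "col (f B) = Blue" using f(2) assms(2,3,5,6) by auto
    ultimately show False unfolding col_def by (auto split: if_splits)
  qed
  moreover have "\<not> has_mono_Qn n N col"
  proof
    assume "has_mono_Qn n N col"
    then obtain f c where f: "order_emb n N f" "\<forall>X\<in>QN n. col (f X) = c"
      unfolding has_mono_Qn_def by blast
    have "card (f {}) + n \<le> card (f {0..<n})" using card_order_emb_chain[OF f(1)] by simp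
    moreover have "card (f {0..<n}) \<le> N"
      using order_emb_subset[OF f(1), of "{0..<n}"] card_mono[of "{0..<N}"] by (force simp: QN_def)
    moreover have "col (f {}) = c" "col (f {0..<n}) = c" using f(2) by (auto simp: QN_def)
    ultimately show False using assms(1) unfolding col_def by (auto split: if_splits)
  qed
  ultimately show ?thesis unfolding EH_prop_def by blast
qed

lemma EH_number_le: "EH_prop pc n N \<Longrightarrow> EH_number pc n \<le> N"
  unfolding EH_number_def by (rule Least_le)

lemma EH_number_ge:
  assumes "EH_prop pc n N" and "\<And>N. N < M \<Longrightarrow> \<not> EH_prop pc n N"
  shows "M \<le> EH_number pc n"
proof -
  have "EH_prop pc n (EH_number pc n)" unfolding EH_number_def using assms(1) by (rule LeastI)
  then show ?thesis using assms(2) not_le by blast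
qed

lemma EH_number_eqI:
  assumes "EH_prop pc n M" and "\<And>N. N < M \<Longrightarrow> \<not> EH_prop pc n N"
  shows "EH_number pc n = M"
  using EH_number_le EH_number_ge assms le_antisym by meson

section \<open>Critical colourings and staircases\<close>

lemma has_mono_Q0: "has_mono_Qn 0 N col"
  unfolding has_mono_Qn_def order_emb_def QN_def by (intro exI[of _ "\<lambda>_. {}"]) auto

locale copy_free_coloring =
  fixes pc :: "nat set \<Rightarrow> color" and n N :: nat and col :: "nat set \<Rightarrow> color"
  assumes no_colored_copy: "\<not> has_colored_copy pc N col"
    and no_mono_Qn: "\<not> has_mono_Qn n N col"
begin

lemma n_pos: "0 < n"
  using no_mono_Qn has_mono_Q0 by (cases n) auto

lemma interval_has_colour:
  assumes "a \<subseteq> d" "d \<subseteq> {0..<N}" "n \<le> card (d - a)"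
  obtains S where "a \<subseteq> S" "S \<subseteq> d" "col S = c"
proof -
  have "\<exists>S. a \<subseteq> S \<and> S \<subseteq> d \<and> col S \<noteq> (if c = Red then Blue else Red)"
    using has_mono_Qn_of_interval[OF assms] no_mono_Qn by blast
  then show ?thesis using that by (cases c) auto
qed

end

lemma EH_prop_iff: "EH_prop pc n N \<longleftrightarrow> (\<forall>col. \<not> copy_free_coloring pc n N col)"
  unfolding EH_prop_def copy_free_coloring_def by blast

definition blue_staircase ::
  "(nat set \<Rightarrow> color) \<Rightarrow> nat set \<Rightarrow> (nat \<Rightarrow> nat set) \<Rightarrow> (nat \<Rightarrow> nat set) \<Rightarrow> nat \<Rightarrow> bool"
  where "blue_staircase col R X B k \<longleftrightarrow>
    (\<forall>j\<le>k. col (R \<union> B j \<union> X j) = Blue) \<and> (\<forall>i j. i \<le> j \<longrightarrow> j \<le> k \<longrightarrow> B i \<subseteq> B j)"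

definition has_blue_staircase ::
  "(nat set \<Rightarrow> color) \<Rightarrow> nat set \<Rightarrow> (nat \<Rightarrow> nat set) \<Rightarrow> nat set \<Rightarrow> nat \<Rightarrow> bool"
  where "has_blue_staircase col R X A k \<longleftrightarrow>
    (\<exists>B. (\<forall>j\<le>k. B j \<subseteq> A) \<and> blue_staircase col R X B k)"

lemma has_blue_staircase_mono:
  "has_blue_staircase col R X A k \<Longrightarrow> A \<subseteq> A' \<Longrightarrow> has_blue_staircase col R X A' k"
  unfolding has_blue_staircase_def by blast

lemma has_blue_staircase_0:
  "col (R \<union> A \<union> X 0) = Blue \<Longrightarrow> has_blue_staircase col R X A 0"
  unfolding has_blue_staircase_def blue_staircase_def by (intro exI[of _ "\<lambda>_. A"]) auto

lemma has_blue_staircase_Suc: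
  assumes "has_blue_staircase col R X A i" "col (R \<union> A \<union> X (Suc i)) = Blue"
  shows "has_blue_staircase col R X A (Suc i)"
proof -
  obtain B where "\<forall>j\<le>i. B j \<subseteq> A" "blue_staircase col R X B i"
    using assms(1) unfolding has_blue_staircase_def by blast
  then show ?thesis
    using assms(2) unfolding has_blue_staircase_def blue_staircase_def
    by (intro exI[of _ "B(Suc i := A)"]) (auto simp: le_Suc_eq)
qed

text \<open>If no staircase of height \<open>k\<close> fits into \<open>Y\<close>, let \<open>h A\<close> be the least height of a
  staircase that does not fit into \<open>A\<close>. Then \<open>A \<mapsto> R \<union> A \<union> X (h A)\<close> is a red cube: a blue
  value would extend a staircase of height \<open>h A - 1\<close> inside \<open>A\<close>.\<close>
lemma has_mono_Qn_or_blue_staircase: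
  assumes "finite Y" "n \<le> card Y"
    and X_mono: "\<And>i j. i \<le> j \<Longrightarrow> j \<le> k \<Longrightarrow> X i \<subseteq> X j"
    and X_disj: "\<And>i. i \<le> k \<Longrightarrow> X i \<inter> Y = {}" and R_disj: "R \<inter> Y = {}"
    and range: "R \<union> Y \<union> X k \<subseteq> {0..<N}"
  shows "has_mono_Qn n N col \<or> has_blue_staircase col R X Y k"
proof (rule disjCI)
  let ?fits = "has_blue_staircase col R X"
  assume "\<not> ?fits Y k"
  then have no_fit: "\<not> ?fits A k" if "A \<subseteq> Y" for A
    using has_blue_staircase_mono that by blast
  define h where "h A = (LEAST i. \<not> ?fits A i)" for A
  have h_le: "h A \<le> k" if "A \<subseteq> Y" for A
    unfolding h_def using no_fit[OF that] by (rule Least_le)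
  have h_not_fits: "\<not> ?fits A (h A)" if "A \<subseteq> Y" for A
    unfolding h_def using no_fit[OF that] by (rule LeastI)
  have h_mono: "h A \<le> h B" if "A \<subseteq> B" "B \<subseteq> Y" for A B
  proof -
    have "\<not> ?fits A (h B)" using h_not_fits[OF that(2)] has_blue_staircase_mono that(1) by blast
    then show ?thesis unfolding h_def by (rule Least_le)
  qed
  have red: "col (R \<union> A \<union> X (h A)) = Red" if "A \<subseteq> Y" for A
  proof (rule ccontr)
    assume "col (R \<union> A \<union> X (h A)) \<noteq> Red"
    then have blue: "col (R \<union> A \<union> X (h A)) = Blue" by simp
    have "?fits A (h A)"
    proof (cases "h A")
      case 0
      then show ?thesis using blue has_blue_staircase_0 by simp
    next
      case (Suc i)
      then have "?fits A i" using not_less_Least[of i "\<lambda>i. \<not> ?fits A i"] unfolding h_def by auto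
      then show ?thesis using has_blue_staircase_Suc blue Suc by simp
    qed
    then show False using h_not_fits[OF that] by blast
  qed
  show "has_mono_Qn n N col"
  proof (rule has_mono_Qn_of_shift[where Y = Y and \<phi> = "\<lambda>A. R \<union> X (h A)" and c = Red])
    show "R \<union> X (h A) \<subseteq> R \<union> X (h B)" if "A \<subseteq> B" "B \<subseteq> Y" for A B
      using X_mono[OF h_mono[OF that] h_le[OF that(2)]] by blast
    show "(R \<union> X (h A)) \<inter> Y = {}" if "A \<subseteq> Y" for A
      using X_disj[OF h_le[OF that]] R_disj that by blast
    show "A \<union> (R \<union> X (h A)) \<subseteq> {0..<N}" if "A \<subseteq> Y" for A
      using range X_mono[OF h_le[OF that] order_refl] that by blast
    show "col (A \<union> (R \<union> X (h A))) = Red" if "A \<subseteq> Y" for A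
      using red[OF that] by (simp add: Un_ac)
  qed (use assms in auto)
qed

section \<open>The pattern brbb\<close>

lemma brbb_copy_of_blue_chain:
  assumes "a \<subset> e" "e \<subset> d" "a \<subset> r" "r \<subset> d" "d \<subseteq> {0..<N}"
    and "col a = Blue" "col e = Blue" "col d = Blue" "col r = Red"
  shows "has_colored_copy Q2_brbb N col"
proof -
  have copy: "has_colored_copy Q2_brbb N col"
    if "a \<subseteq> b" "a \<subseteq> c" "b \<subseteq> d" "c \<subseteq> d" "\<not> b \<subseteq> c" "\<not> c \<subseteq> b" "col b = Red" "col c = Blue"
    for b c
    using has_colored_copy_of_sets[OF that(1-6) assms(5)] that(7,8) assms(6,8)
    by (simp add: Q2_brbb_def)
  show ?thesis
  proof (cases "\<exists>y\<in>d - r. col (insert y a) = Blue")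
    case True
    then obtain y where y: "y \<in> d" "y \<notin> r" "col (insert y a) = Blue" by blast
    show ?thesis by (rule copy[of r "insert y a"]) (use assms(1-4,9) y in blast)+
  next
    case False
    then have red: "col (insert y a) = Red" if "y \<in> d - r" for y
      using that by auto
    show ?thesis
    proof (cases "r \<subseteq> e \<or> e \<subseteq> r")
      case True
      then obtain y where y: "y \<in> d" "y \<notin> e" "y \<notin> r" using assms(2,4) by blast
      show ?thesis by (rule copy[of "insert y a" e]) (use assms(1-4,7) y red[of y] in blast)+
    next
      case False
      show ?thesis by (rule copy[of r e]) (use assms(1-4,7,9) False in blast)+
    qed
  qed
qed

lemma not_copy_free_Q2_brbb: "\<not> copy_free_coloring Q2_brbb n (2 * n) col"
proof
  assume "copy_free_coloring Q2_brbb n (2 * n) col"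
  then interpret copy_free_coloring Q2_brbb n "2 * n" col .
  define X where "X j = {n..<n + j}" for j
  obtain B where B: "\<forall>j\<le>n. B j \<subseteq> {0..<n}" "blue_staircase col {} X B n"
    using has_mono_Qn_or_blue_staircase[of "{0..<n}" n n X "{}" "2 * n" col] no_mono_Qn
    unfolding has_blue_staircase_def by (auto simp: X_def)
  define a where "a = B 0"
  define d where "d = B n \<union> X n"
  have blue: "col a = Blue" "col d = Blue"
    using B(2) by (auto simp: blue_staircase_def a_def d_def X_def)
  have B_sub: "B 0 \<subseteq> B n" "B n \<subseteq> {0..<n}"
    using B unfolding blue_staircase_def by auto
  then have ad: "a \<subseteq> d" "d \<subseteq> {0..<2 * n}" "X n \<subseteq> d - a"
    by (auto simp: a_def d_def X_def)
  then have "n \<le> card (d - a)"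
    using card_mono[of "d - a" "X n"] finite_subset by (fastforce simp: X_def)
  then obtain r where r: "a \<subseteq> r" "r \<subseteq> d" "col r = Red"
    using interval_has_colour[OF ad(1,2)] by blast
  have "a \<noteq> d" using \<open>n \<le> card (d - a)\<close> n_pos by auto
  show False
  proof (cases "n = 1")
    case True
    then show False
      using has_mono_Q1[of a d "2 * n" col Blue] ad blue \<open>a \<noteq> d\<close> no_mono_Qn by auto
  next
    case False
    with n_pos have "2 \<le> n" by simp
    define e where "e = B 1 \<union> X 1"
    have "col e = Blue" using B(2) \<open>2 \<le> n\<close> by (auto simp: blue_staircase_def e_def)
    have "B 0 \<subseteq> B 1" "B 1 \<subseteq> B n" using B(2) \<open>2 \<le> n\<close> unfolding blue_staircase_def by auto
    then have "a \<subseteq> e" "e \<subseteq> d" "n \<in> e - a" "Suc n \<in> d - e"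
      using B_sub \<open>2 \<le> n\<close> by (auto simp: a_def d_def e_def X_def)
    then have "a \<subset> e" "e \<subset> d" by blast+
    moreover have "a \<subset> r" "r \<subset> d" using r blue by auto
    ultimately have "has_colored_copy Q2_brbb (2 * n) col"
      using brbb_copy_of_blue_chain[of a e d r] ad(2) blue r(3) \<open>col e = Blue\<close> by blast
    then show False using no_colored_copy by blast
  qed
qed

lemma EH_prop_Q2_brbb: "EH_prop Q2_brbb n (2 * n)"
  using not_copy_free_Q2_brbb EH_prop_iff by blast

section \<open>The pattern brrb\<close>

locale brrb_free = copy_free_coloring Q2_brrb n N col for n N col
begin

text \<open>Take a smallest red \<open>r0\<close> between \<open>a\<close> and \<open>d\<close> and a point \<open>x \<in> r0 - a\<close>. A red set
  between \<open>a\<close> and \<open>d - {x}\<close> is either strictly below \<open>r0\<close>, contradicting minimality, or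
  incomparable with \<open>r0\<close>, giving the pattern; so the interval up to \<open>d - {x}\<close> is blue.\<close>
lemma card_diff_blue_pair_le:
  assumes ad: "a \<subseteq> d" "d \<subseteq> {0..<N}" and blue: "col a = Blue" "col d = Blue"
  shows "card (d - a) \<le> n"
proof (rule ccontr)
  assume "\<not> card (d - a) \<le> n"
  then have gap: "n < card (d - a)" by simp
  have fin: "finite d" using ad(2) finite_subset by blast
  define P where "P r \<longleftrightarrow> a \<subseteq> r \<and> r \<subseteq> d \<and> col r = Red" for r
  obtain r where "a \<subseteq> r" "r \<subseteq> d" "col r = Red"
    using interval_has_colour[OF ad less_imp_le[OF gap]] by blast
  then have "P r" unfolding P_def by blast
  then obtain r0 where "P r0" and r0_least: "\<And>r. P r \<Longrightarrow> card r0 \<le> card r"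
    using ex_has_least_nat[of P r card] by blast
  then have r0: "a \<subseteq> r0" "r0 \<subseteq> d" "col r0 = Red" unfolding P_def by auto
  moreover have "r0 \<noteq> a" using r0(3) blue(1) by auto
  ultimately obtain x where x: "x \<in> r0" "x \<notin> a" by blast
  have "x \<in> d - a" using x r0 by blast
  have "d - {x} - a = (d - a) - {x}" by blast
  then have "card (d - {x} - a) = card (d - a) - 1"
    using card_Diff_singleton[OF \<open>x \<in> d - a\<close>] by (simp only:)
  then have "n \<le> card (d - {x} - a)" "a \<subseteq> d - {x}" "d - {x} \<subseteq> {0..<N}"
    using gap ad x by auto
  then obtain S where S: "a \<subseteq> S" "S \<subseteq> d - {x}" "col S = Red"
    using interval_has_colour[of a "d - {x}" Red] by blast
  show False
  proof (cases "S \<subseteq> r0")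
    case True
    then have "S \<subset> r0" using S(2) x(1) by blast
    then have "card S < card r0"
      using r0(2) fin by (meson psubset_card_mono rev_finite_subset)
    moreover have "P S" using S unfolding P_def by blast
    ultimately show False using r0_least by fastforce
  next
    case False
    have "\<not> r0 \<subseteq> S" using S(2) x(1) by blast
    have "has_colored_copy Q2_brrb N col"
    proof (rule has_colored_copy_of_sets[of a S r0 d])
      show "S \<subseteq> d" using S(2) by blast
    qed (use False \<open>\<not> r0 \<subseteq> S\<close> S r0 ad blue in \<open>simp_all add: Q2_brrb_def\<close>)
    then show False using no_colored_copy by blast
  qed
qed

lemma red_extension_above_blue:
  assumes "A' \<subset> A" "A \<inter> X = {}" "A \<union> X \<subseteq> {0..<N}" "card X = n" "col A' = Blue"
  shows "col (A \<union> X) = Red"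
proof (rule ccontr)
  assume "col (A \<union> X) \<noteq> Red"
  then have "card (A \<union> X - A') \<le> n"
    using card_diff_blue_pair_le[of A' "A \<union> X"] assms by auto
  moreover have "A \<union> X - A' = (A - A') \<union> X" "(A - A') \<inter> X = {}" "A - A' \<noteq> {}"
    using assms(1,2) by blast+
  moreover have "finite (A - A')" "finite X" using assms(3) finite_subset by blast+
  ultimately show False
    using card_Un_disjoint[of "A - A'" X] card_gt_0_iff[of "A - A'"] assms(4) by simp
qed

end

text \<open>The red cube is \<open>A \<mapsto> A \<union> \<phi> A\<close> on \<open>Y = {0..<n}\<close> with \<open>\<phi> A \<subseteq> X = {n..<2n}\<close>:
  \<open>\<phi> A = {}\<close> if \<open>A\<close> has only red subsets, \<open>\<phi> A = X\<close> if \<open>A \<union> X\<close> is red, and otherwise any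
  red extension of \<open>A\<close> into \<open>X\<close>. It is monotone because above a blue set the full
  extension \<open>A \<union> X\<close> is red.\<close>
lemma not_brrb_free_double: "\<not> brrb_free n (2 * n) col"
proof
  assume "brrb_free n (2 * n) col"
  then interpret brrb_free n "2 * n" col .
  define Y where "Y = {0..<n}"
  define X where "X = {n..<2 * n}"
  have YX: "Y \<inter> X = {}" "Y \<union> X = {0..<2 * n}" "card X = n" "card Y = n"
    by (auto simp: X_def Y_def)
  have "\<exists>S. S \<subseteq> X \<and> col (A \<union> S) = Red" if "A \<subseteq> Y" for A
  proof -
    have "A \<union> X - A = X" "A \<union> X \<subseteq> {0..<2 * n}" using that YX by blast+
    then obtain S where "A \<subseteq> S" "S \<subseteq> A \<union> X" "col S = Red"
      using interval_has_colour[of A "A \<union> X" Red] YX(3) by auto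
    then show ?thesis by (intro exI[of _ "S - A"]) (auto simp: Un_absorb1)
  qed
  then obtain ext where ext: "\<And>A. A \<subseteq> Y \<Longrightarrow> ext A \<subseteq> X \<and> col (A \<union> ext A) = Red"
    by metis
  define all_red where "all_red A \<longleftrightarrow> (\<forall>A'\<subseteq>A. col A' = Red)" for A
  define \<phi> where "\<phi> A = (if all_red A then {} else if col (A \<union> X) = Red then X else ext A)" for A
  have \<phi>_X: "\<phi> A \<subseteq> X" if "A \<subseteq> Y" for A
    using ext[OF that] by (simp add: \<phi>_def)
  have \<phi>_red: "col (A \<union> \<phi> A) = Red" if "A \<subseteq> Y" for A
    using ext[OF that] by (auto simp: \<phi>_def all_red_def)
  have \<phi>_mono: "\<phi> A \<subseteq> \<phi> B" if AB: "A \<subseteq> B" and BY: "B \<subseteq> Y" for A B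
  proof (cases "all_red A \<or> A = B")
    case True
    then show ?thesis by (auto simp: \<phi>_def)
  next
    case False
    then obtain A' where A': "A' \<subseteq> A" "col A' = Blue" and "A \<subset> B"
      using AB by (auto simp: all_red_def)
    then have "col (B \<union> X) = Red"
      using red_extension_above_blue[of A' B X] BY YX by blast
    moreover have "\<not> all_red B" using A' \<open>A \<subset> B\<close> by (auto simp: all_red_def)
    ultimately have "\<phi> B = X" by (simp add: \<phi>_def)
    then show ?thesis using \<phi>_X AB BY by blast
  qed
  have "has_mono_Qn n (2 * n) col"
  proof (rule has_mono_Qn_of_shift[where Y = Y and \<phi> = \<phi> and c = Red])
    show "\<phi> A \<inter> Y = {}" "A \<union> \<phi> A \<subseteq> {0..<2 * n}" if "A \<subseteq> Y" for A
      using \<phi>_X[OF that] that YX(1,2) by blast+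
  qed (use \<phi>_mono \<phi>_red YX in auto)
  then show False using no_mono_Qn by blast
qed

lemma EH_prop_Q2_brrb: "EH_prop Q2_brrb n (2 * n)"
  using not_brrb_free_double EH_prop_iff unfolding brrb_free_def by blast

section \<open>The pattern rrbb\<close>

definition swap_color :: "color \<Rightarrow> color" where
  "swap_color c = (if c = Blue then Red else Blue)"

lemma swap_color_simps [simp]: "swap_color Blue = Red" "swap_color Red = Blue"
  by (simp_all add: swap_color_def)

lemma swap_color_eq_iff: "swap_color c = d \<longleftrightarrow> c = swap_color d"
  by (cases c; cases d) simp_all

definition dual_coloring :: "nat \<Rightarrow> (nat set \<Rightarrow> color) \<Rightarrow> nat set \<Rightarrow> color" where
  "dual_coloring N col S = swap_color (col ({0..<N} - S))"

lemma dual_coloring_compl: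
  "S \<subseteq> {0..<N} \<Longrightarrow> dual_coloring N col ({0..<N} - S) = swap_color (col S)"
  by (simp add: dual_coloring_def double_diff)

lemma order_emb_compl:
  assumes "order_emb m N f"
  shows "order_emb m N (\<lambda>A. {0..<N} - f ({0..<m} - A))"
  unfolding order_emb_def
proof (intro conjI ballI)
  fix A B assume A: "A \<in> QN m" and B: "B \<in> QN m"
  show "{0..<N} - f ({0..<m} - A) \<in> QN N" by (simp add: QN_def)
  have cA: "{0..<m} - A \<in> QN m" and cB: "{0..<m} - B \<in> QN m" by (auto simp: QN_def)
  have "A \<subseteq> B \<longleftrightarrow> {0..<m} - B \<subseteq> {0..<m} - A"
    using A B by (auto simp: QN_def)
  also have "\<dots> \<longleftrightarrow> f ({0..<m} - B) \<subseteq> f ({0..<m} - A)"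
    by (rule order_emb_iff[OF assms cB cA])
  also have "\<dots> \<longleftrightarrow> {0..<N} - f ({0..<m} - A) \<subseteq> {0..<N} - f ({0..<m} - B)"
    using order_emb_subset[OF assms cA] order_emb_subset[OF assms cB] by blast
  finally show "A \<subseteq> B \<longleftrightarrow> {0..<N} - f ({0..<m} - A) \<subseteq> {0..<N} - f ({0..<m} - B)" .
qed

lemma has_mono_Qn_of_dual:
  assumes "has_mono_Qn n N (dual_coloring N col)"
  shows "has_mono_Qn n N col"
proof -
  obtain f c where f: "order_emb n N f" "\<forall>A\<in>QN n. dual_coloring N col (f A) = c"
    using assms unfolding has_mono_Qn_def by blast
  have "col ({0..<N} - f ({0..<n} - A)) = swap_color c" if "A \<in> QN n" for A
  proof -
    have "{0..<n} - A \<in> QN n" by (simp add: QN_def)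
    then show ?thesis using f(2) by (simp add: dual_coloring_def swap_color_eq_iff)
  qed
  then show ?thesis using order_emb_compl[OF f(1)] unfolding has_mono_Qn_def by blast
qed

lemma has_colored_copy_of_dual:
  assumes "has_colored_copy pc N (dual_coloring N col)"
  shows "has_colored_copy (dual_coloring 2 pc) N col"
proof -
  obtain f where f: "order_emb 2 N f" "\<forall>A\<in>QN 2. dual_coloring N col (f A) = pc A"
    using assms unfolding has_colored_copy_def by blast
  have "col ({0..<N} - f ({0..<2} - A)) = dual_coloring 2 pc A" if "A \<in> QN 2" for A
  proof -
    have "{0..<2} - A \<in> QN 2" by (simp add: QN_def)
    then show ?thesis using f(2) by (simp add: dual_coloring_def swap_color_eq_iff)
  qed
  then show ?thesis using order_emb_compl[OF f(1)] unfolding has_colored_copy_def by blast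
qed

lemma dual_Q2_rrbb: "A \<in> QN 2 \<Longrightarrow> dual_coloring 2 Q2_rrbb A = Q2_rrbb A"
proof -
  have "{0..<2::nat} = {0, 1}" by auto
  then show "A \<in> QN 2 \<Longrightarrow> dual_coloring 2 Q2_rrbb A = Q2_rrbb A"
    unfolding QN_2 by (auto simp: dual_coloring_def Q2_rrbb_def insert_Diff_if)
qed

lemma rrbb_copy_of_chains:
  assumes "e \<subseteq> u" "u \<subseteq> d" "e \<subseteq> v" "v \<subseteq> d" "u \<noteq> e" "v \<noteq> d" "d \<subseteq> {0..<N}"
    and "col e = Red" "col u = Red" "col v = Blue" "col d = Blue"
  shows "has_colored_copy Q2_rrbb N col"
proof -
  have copy: "has_colored_copy Q2_rrbb N col"
    if "e \<subseteq> b" "e \<subseteq> c" "b \<subseteq> d" "c \<subseteq> d" "\<not> b \<subseteq> c" "\<not> c \<subseteq> b" "col b = Red" "col c = Blue"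
    for b c
    using has_colored_copy_of_sets[OF that(1-6) assms(7)] that(7,8) assms(8,11)
    by (simp add: Q2_rrbb_def)
  show ?thesis
  proof (cases "u \<subseteq> v \<or> v \<subseteq> u")
    case True
    have "u \<noteq> d" "v \<noteq> e" using assms(8-11) by auto
    then obtain y where y: "y \<in> d" "y \<notin> u" "y \<notin> v" using True assms(2,4,6) by blast
    show ?thesis
    proof (cases "col (insert y e)")
      case Blue
      show ?thesis by (rule copy[of u "insert y e"]) (use assms(1-5,9) y Blue in blast)+
    next
      case Red
      show ?thesis by (rule copy[of "insert y e" v]) (use assms(1-4,10) \<open>v \<noteq> e\<close> y Red in blast)+
    qed
  next
    case False
    show ?thesis by (rule copy[of u v]) (use assms False in blast)+
  qed
qed

locale rrbb_free = copy_free_coloring Q2_rrbb n "2 * n" col for n col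
begin

lemma rrbb_free_dual: "rrbb_free n (dual_coloring (2 * n) col)"
proof unfold_locales
  show "\<not> has_colored_copy Q2_rrbb (2 * n) (dual_coloring (2 * n) col)"
  proof
    assume "has_colored_copy Q2_rrbb (2 * n) (dual_coloring (2 * n) col)"
    then have "has_colored_copy (dual_coloring 2 Q2_rrbb) (2 * n) col"
      by (rule has_colored_copy_of_dual)
    then show False
      using no_colored_copy dual_Q2_rrbb unfolding has_colored_copy_def by auto
  qed
  show "\<not> has_mono_Qn n (2 * n) (dual_coloring (2 * n) col)"
    using no_mono_Qn has_mono_Qn_of_dual by blast
qed

lemma no_red_chain_below_blue_chain:
  assumes "e \<subseteq> u" "u \<subseteq> d" "e \<subseteq> v" "v \<subseteq> d" "u \<noteq> e" "v \<noteq> d" "d \<subseteq> {0..<2 * n}"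
    and "col e = Red" "col u = Red" "col v = Blue" "col d = Blue"
  shows False
  using rrbb_copy_of_chains[OF assms] no_colored_copy by blast

text \<open>Fix \<open>w \<notin> a'\<close>. A set \<open>a' \<union> A\<close> below a blue set \<open>a' \<union> B \<union> {w}\<close> is red, as otherwise the
  pattern appears above \<open>a\<close>; so choosing between \<open>a' \<union> A\<close> and \<open>a' \<union> A \<union> {w}\<close> gives a red cube
  on the complement of \<open>a' \<union> {w}\<close>, which is too large unless \<open>n \<le> card a'\<close>.\<close>
lemma card_ge_of_red_chain:
  assumes "a \<subset> a'" "a' \<subseteq> {0..<2 * n}" "col a = Red" "col a' = Red"
  shows "n \<le> card a'"
proof (rule ccontr)
  let ?T = "{0..<2 * n}"
  assume "\<not> n \<le> card a'"
  then have small: "card a' < n" by simp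
  have "a' \<noteq> ?T" using small by auto
  then obtain w where w: "w \<in> ?T" "w \<notin> a'" using assms(2) by blast
  define R where "R = ?T - a' - {w}"
  have "n \<le> card R" using card_compl_minus_point[OF assms(2)] w small by (simp add: R_def)
  define P where "P A \<longleftrightarrow> (\<exists>B. A \<subseteq> B \<and> B \<subseteq> R \<and> col (a' \<union> B \<union> {w}) = Blue)" for A
  have "has_mono_Qn n (2 * n) col"
  proof (rule has_mono_Qn_of_down_closed[where Y = R and w = w and a = a' and P = P and c = Red])
    show "col (a' \<union> A) = Red" if A: "A \<subseteq> R" and PA: "P A" for A
    proof (rule ccontr)
      assume "col (a' \<union> A) \<noteq> Red"
      then have blue: "col (a' \<union> A) = Blue" by simp
      obtain B where B: "A \<subseteq> B" "B \<subseteq> R" "col (a' \<union> B \<union> {w}) = Blue"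
        using PA unfolding P_def by blast
      have sets: "a \<subseteq> a'" "a' \<noteq> a" "w \<notin> a' \<union> A" "B \<subseteq> {0..<2 * n}"
        using assms(1) w A B(2) by (auto simp: R_def)
      show False
        by (rule no_red_chain_below_blue_chain[of a a' "a' \<union> B \<union> {w}" "a' \<union> A"])
          (use sets blue B assms(2-4) w(1) in auto)
    qed
    show "col (a' \<union> A \<union> {w}) = Red" if "A \<subseteq> R" "\<not> P A" for A
    proof -
      have "col (a' \<union> A \<union> {w}) \<noteq> Blue" using that unfolding P_def by blast
      then show ?thesis by simp
    qed
    show "P A" if "A \<subseteq> B" "B \<subseteq> R" "P B" for A B
      using that unfolding P_def by blast
    show "finite R" by (simp add: R_def)
    show "a' \<union> R \<union> {w} \<subseteq> {0..<2 * n}" using assms(2) w(1) by (auto simp: R_def)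
  qed (use \<open>n \<le> card R\<close> in \<open>auto simp: R_def\<close>)
  then show False using no_mono_Qn by blast
qed

text \<open>A minimal red set \<open>a\<close> has at least \<open>n - 1\<close> elements. Otherwise every set with more
  than \<open>n\<close> elements above \<open>a\<close> is red, and \<open>a\<close> together with the sets \<open>a \<union> X \<union> A\<close>, where
  \<open>card (a \<union> X) = n\<close> and \<open>{} \<noteq> A \<subseteq> Y\<close> for an \<open>n\<close>-set \<open>Y\<close> outside \<open>a \<union> X\<close>, is a red cube.\<close>
context
  fixes a :: "nat set"
  assumes a: "a \<subseteq> {0..<2 * n}" "col a = Red"
    and a_min: "\<And>a'. a' \<subset> a \<Longrightarrow> col a' = Blue"
    and a_small: "card a + 2 \<le> n"
begin

lemma blue_strictly_between:
  assumes "a \<subset> u" "u \<subset> S" "S \<subseteq> {0..<2 * n}" "col S = Blue" "n < card S"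
  shows "col u = Blue"
proof (rule ccontr)
  assume "col u \<noteq> Blue"
  obtain w where w: "w \<in> S" "w \<notin> a" using assms(1,2) by blast
  have fin: "finite a" using a(1) finite_subset by blast
  then have card_aw: "card (insert w a) = card a + 1" using w(2) by simp
  have "insert w a \<subseteq> {0..<2 * n}" using w assms(3) a(1) by blast
  then have "col (insert w a) = Blue"
    using card_ge_of_red_chain[of a "insert w a"] a(2) w(2) card_aw a_small by force
  moreover have "insert w a \<noteq> S" using card_aw assms(5) a_small by auto
  ultimately show False
    using no_red_chain_below_blue_chain[of a u S "insert w a"] assms a(2) w \<open>col u \<noteq> Blue\<close>
    by auto
qed

lemma blue_below_red_inside_blue:
  assumes S: "a \<subset> S" "S \<subseteq> {0..<2 * n}" "col S = Blue" "n < card S"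
    and r: "A \<union> {w} \<subseteq> r" "r \<subseteq> S" "col r = Red" and w: "w \<notin> A" "w \<notin> a"
  shows "col A = Blue"
proof (rule ccontr)
  assume "col A \<noteq> Blue"
  then have A_red: "col A = Red" by simp
  have "r \<noteq> S" using r(3) S(3) by auto
  consider "A \<subset> a" | "A = a" | "\<not> A \<subseteq> a" by blast
  then show False
  proof cases
    case 1
    then show False using a_min A_red by auto
  next
    case 2
    then have "col r = Blue"
      using blue_strictly_between[of r S] S r w \<open>r \<noteq> S\<close> by blast
    then show False using r(3) by simp
  next
    case 3
    have "a \<subset> A \<union> a" "A \<union> a \<subset> S" using 3 S(1) r w by blast+
    then have "col (A \<union> a) = Blue" using blue_strictly_between S by blast
    then show False
      using no_red_chain_below_blue_chain[of A r S "A \<union> a"] S r w A_red \<open>A \<union> a \<subset> S\<close>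
      by blast
  qed
qed

lemma red_above_minimal_red:
  assumes "a \<subset> S" "S \<subseteq> {0..<2 * n}" "n < card S"
  shows "col S = Red"
proof (rule ccontr)
  assume "col S \<noteq> Red"
  then have S_blue: "col S = Blue" by simp
  obtain w where w: "w \<in> S" "w \<notin> a" using assms(1) by blast
  have fin: "finite S" using assms(2) finite_subset by blast
  define P where "P A \<longleftrightarrow> (\<exists>r. A \<union> {w} \<subseteq> r \<and> r \<subseteq> S \<and> col r = Red)" for A
  have "has_mono_Qn n (2 * n) col"
  proof (rule has_mono_Qn_of_down_closed[where Y = "S - {w}" and w = w and a = "{}" and P = P
        and c = Blue])
    show "finite (S - {w})" using fin by simp
    show "n \<le> card (S - {w})" using assms(3) w(1) by (simp add: card_Diff_singleton)
    show "{} \<union> (S - {w}) \<union> {w} \<subseteq> {0..<2 * n}" using w(1) assms(2) by blast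
    show "P A" if "A \<subseteq> B" "B \<subseteq> S - {w}" "P B" for A B
      using that unfolding P_def by blast
    show "col ({} \<union> A) = Blue" if A: "A \<subseteq> S - {w}" and PA: "P A" for A
    proof -
      obtain r where r: "A \<union> {w} \<subseteq> r" "r \<subseteq> S" "col r = Red"
        using PA unfolding P_def by blast
      have "w \<notin> A" using A by blast
      then have "col A = Blue"
        using blue_below_red_inside_blue[OF assms(1,2) S_blue assms(3) r] w(2) by blast
      then show ?thesis by simp
    qed
    show "col ({} \<union> A \<union> {w}) = Blue" if A: "A \<subseteq> S - {w}" and notPA: "\<not> P A" for A
    proof -
      have "A \<union> {w} \<subseteq> S" using A w(1) by blast
      then have "col (A \<union> {w}) \<noteq> Red" using notPA unfolding P_def by blast
      then show ?thesis by simp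
    qed
  qed simp_all
  then show False using no_mono_Qn by blast
qed

lemma small_minimal_red_absurd: False
proof -
  let ?T = "{0..<2 * n}"
  have "card (?T - a) = 2 * n - card a" using a(1) by (simp add: card_Diff_subset finite_subset)
  then have "n \<le> card (?T - a)" using a_small by simp
  then obtain Y where Y: "Y \<subseteq> ?T - a" "card Y = n" "finite Y"
    by (rule obtain_subset_with_card_n)
  have fin_a: "finite a" using a(1) by (rule finite_subset) simp
  define X where "X = ?T - a - Y"
  have "a \<union> X = ?T - Y" using Y a(1) by (auto simp: X_def)
  moreover have "Y \<subseteq> ?T" using Y(1) by blast
  ultimately have card_aX: "card (a \<union> X) = n" using Y(2,3) by (simp add: card_Diff_subset)
  have "has_mono_Qn n (2 * n) col"
  proof (rule has_mono_Qn_of_shift[where Y = Y and \<phi> = "\<lambda>A. if A = {} then a else a \<union> X"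
        and c = Red])
    show "col (A \<union> (if A = {} then a else a \<union> X)) = Red" if "A \<subseteq> Y" for A
    proof (cases "A = {}")
      case False
      have "finite (a \<union> X)" "finite A" "(a \<union> X) \<inter> A = {}"
        using that Y fin_a finite_subset[OF that Y(3)] by (auto simp: X_def)
      then have "card (A \<union> (a \<union> X)) = card A + n"
        using card_aX by (simp add: card_Un_disjoint Int_commute)
      moreover have "card A > 0" using False \<open>finite A\<close> by auto
      moreover have "a \<subset> A \<union> (a \<union> X)" "A \<union> (a \<union> X) \<subseteq> ?T"
        using False that Y a(1) by (auto simp: X_def)
      ultimately show ?thesis using red_above_minimal_red False by simp
    qed (use a(2) in simp)
  qed (use Y a(1) in \<open>auto simp: X_def\<close>)
  then show False using no_mono_Qn by blast
qed

end

lemma card_red_ge: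
  assumes S: "S \<subseteq> {0..<2 * n}" "col S = Red"
  shows "n \<le> card S + 1"
proof -
  have fin: "finite S" using S(1) by (rule finite_subset) simp
  define P where "P a \<longleftrightarrow> a \<subseteq> S \<and> col a = Red" for a
  have "P S" using S(2) unfolding P_def by blast
  then obtain a where "P a" and a_least: "\<And>b. P b \<Longrightarrow> card a \<le> card b"
    using ex_has_least_nat[of P S card] by blast
  then have a: "a \<subseteq> S" "col a = Red" unfolding P_def by blast+
  have "col a' = Blue" if "a' \<subset> a" for a'
  proof (rule ccontr)
    assume "col a' \<noteq> Blue"
    then have "P a'" using that a(1) unfolding P_def by auto
    moreover have "card a' < card a"
      using that a(1) fin by (meson psubset_card_mono finite_subset)
    ultimately show False using a_least[of a'] by simp
  qed
  then have "\<not> card a + 2 \<le> n" using small_minimal_red_absurd[of a] a S(1) by blast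
  moreover have "card a \<le> card S" using card_mono[OF fin a(1)] .
  ultimately show ?thesis by simp
qed

lemma blue_of_card_small:
  assumes "S \<subseteq> {0..<2 * n}" "card S + 2 \<le> n"
  shows "col S = Blue"
  using card_red_ge[OF assms(1)] assms(2) by (cases "col S") auto

lemma red_of_blue_minus_point:
  assumes d: "d \<subseteq> {0..<2 * n}" "card d = n + 1" "col d = Blue" and "w \<in> d"
  shows "col (d - {w}) = Red"
proof (rule ccontr)
  define Y where "Y = d - {w}"
  assume "col (d - {w}) \<noteq> Red"
  then have Y_blue: "col Y = Blue" by (simp add: Y_def)
  have fin: "finite d" using d(1) by (rule finite_subset) simp
  have Y: "finite Y" "card Y = n" "w \<notin> Y" "Y \<union> {w} = d" "Y \<subseteq> d"
    using fin d(2) \<open>w \<in> d\<close> by (auto simp: Y_def)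
  define P where "P A \<longleftrightarrow> A \<noteq> Y \<and> col A = Blue" for A
  have "has_mono_Qn n (2 * n) col"
  proof (rule has_mono_Qn_of_down_closed[where Y = Y and w = w and a = "{}" and P = P and c = Blue])
    show "P A" if AB: "A \<subseteq> B" and BY: "B \<subseteq> Y" and PB: "P B" for A B
    proof -
      have "B \<subset> Y" using BY PB unfolding P_def by blast
      then have "card B < n" using psubset_card_mono[OF Y(1)] Y(2) by blast
      have "col A = Blue"
      proof (cases "A = B")
        case True
        then show ?thesis using PB unfolding P_def by simp
      next
        case False
        then have "card A < card B"
          using AB BY Y(1) by (meson psubset_card_mono finite_subset psubsetI)
        moreover have "A \<subseteq> {0..<2 * n}" using AB BY Y(5) d(1) by blast
        ultimately show ?thesis using blue_of_card_small[of A] \<open>card B < n\<close> by simp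
      qed
      moreover have "A \<noteq> Y" using AB \<open>B \<subset> Y\<close> by blast
      ultimately show ?thesis unfolding P_def by blast
    qed
    show "col ({} \<union> A) = Blue" if "A \<subseteq> Y" "P A" for A
      using that unfolding P_def by simp
    show "col ({} \<union> A \<union> {w}) = Blue" if A: "A \<subseteq> Y" and notPA: "\<not> P A" for A
    proof (cases "A = Y")
      case True
      then show ?thesis using Y(4) d(3) by simp
    next
      case False
      then have A_red: "col A = Red" using notPA unfolding P_def by simp
      show ?thesis
      proof (rule ccontr)
        assume "col ({} \<union> A \<union> {w}) \<noteq> Blue"
        then have "col (A \<union> {w}) = Red" by simp
        show False
          by (rule no_red_chain_below_blue_chain[of A "A \<union> {w}" d Y])
            (use A Y d A_red \<open>col (A \<union> {w}) = Red\<close> Y_blue in auto)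
      qed
    qed
  qed (use Y d(1) in auto)
  then show False using no_mono_Qn by blast
qed

lemma blue_of_red_plus_point:
  assumes e: "e \<subseteq> {0..<2 * n}" "card e + 1 = n" "col e = Red" and w: "w \<in> {0..<2 * n} - e"
  shows "col (insert w e) = Blue"
proof -
  let ?T = "{0..<2 * n}"
  interpret dual: rrbb_free n "dual_coloring (2 * n) col" by (rule rrbb_free_dual)
  have "card (?T - e) = n + 1" using e(1,2) by (simp add: card_Diff_subset finite_subset)
  moreover have "dual_coloring (2 * n) col (?T - e) = Blue"
    using dual_coloring_compl[OF e(1)] e(3) by simp
  ultimately have "dual_coloring (2 * n) col (?T - e - {w}) = Red"
    using dual.red_of_blue_minus_point[of "?T - e" w] w by blast
  moreover have "?T - e - {w} = ?T - insert w e" by blast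
  moreover have "insert w e \<subseteq> ?T" using e(1) w by blast
  ultimately have "swap_color (col (insert w e)) = Red"
    using dual_coloring_compl[of "insert w e" "2 * n" col] by simp
  then show ?thesis by (simp add: swap_color_eq_iff)
qed

lemma red_of_card_Suc:
  assumes d: "d \<subseteq> {0..<2 * n}" "card d = n + 1"
  shows "col d = Red"
proof (rule ccontr)
  assume "col d \<noteq> Red"
  then have d_blue: "col d = Blue" by simp
  have fin: "finite d" using d(1) by (rule finite_subset) simp
  have sub_blue: "col e = Blue" if e: "e \<subseteq> d" "card e + 1 = n" for e
  proof (rule ccontr)
    assume "col e \<noteq> Blue"
    then have e_red: "col e = Red" by simp
    have "card (d - e) = 2" using e d(2) fin by (simp add: card_Diff_subset finite_subset)
    then obtain w1 w2 where w: "d - e = {w1, w2}" "w1 \<noteq> w2" by (meson card_2_iff)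
    have "col (d - {w2}) = Red" using red_of_blue_minus_point[OF d d_blue] w by blast
    moreover have "d - {w2} = insert w1 e" using w e(1) by blast
    moreover have "col (insert w1 e) = Blue"
      using blue_of_red_plus_point[of e w1] e d(1) e_red w by blast
    ultimately show False by simp
  qed
  obtain w where "w \<in> d" using d(2) by fastforce
  define Y where "Y = d - {w}"
  have Y: "finite Y" "card Y = n" "w \<notin> Y" "Y \<union> {w} = d" "Y \<subseteq> d"
    using fin d(2) \<open>w \<in> d\<close> by (auto simp: Y_def)
  have "has_mono_Qn n (2 * n) col"
  proof (rule has_mono_Qn_of_down_closed[where Y = Y and w = w and a = "{}" and P = "\<lambda>A. A \<noteq> Y"
        and c = Blue])
    show "col ({} \<union> A) = Blue" if A: "A \<subseteq> Y" "A \<noteq> Y" for A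
    proof -
      have "card A < n" using A psubset_card_mono[OF Y(1)] Y(2) by blast
      moreover have "A \<subseteq> {0..<2 * n}" using A(1) Y(5) d(1) by blast
      ultimately show ?thesis
        using sub_blue[of A] blue_of_card_small[of A] A(1) Y(5) by (cases "card A + 1 = n") auto
    qed
  qed (use Y d(1) d_blue in auto)
  then show False using no_mono_Qn by blast
qed

lemma blue_of_card_pred:
  assumes "e \<subseteq> {0..<2 * n}" "card e + 1 = n"
  shows "col e = Blue"
proof -
  interpret dual: rrbb_free n "dual_coloring (2 * n) col" by (rule rrbb_free_dual)
  have "card ({0..<2 * n} - e) = n + 1" using assms by (simp add: card_Diff_subset finite_subset)
  then have "dual_coloring (2 * n) col ({0..<2 * n} - e) = Red"
    using dual.red_of_card_Suc by blast
  then show ?thesis using dual_coloring_compl[OF assms(1)] by (simp add: swap_color_eq_iff)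
qed

lemma blue_of_card_less:
  assumes "S \<subseteq> {0..<2 * n}" "card S < n"
  shows "col S = Blue"
  using blue_of_card_pred[OF assms(1)] blue_of_card_small[OF assms(1)] assms(2)
  by (cases "card S + 1 = n") auto

lemma red_of_card_greater:
  assumes "S \<subseteq> {0..<2 * n}" "n < card S"
  shows "col S = Red"
proof -
  interpret dual: rrbb_free n "dual_coloring (2 * n) col" by (rule rrbb_free_dual)
  have "card S \<le> 2 * n" using card_mono[OF _ assms(1)] by simp
  then have "card ({0..<2 * n} - S) < n" using assms by (simp add: card_Diff_subset finite_subset)
  then have "dual_coloring (2 * n) col ({0..<2 * n} - S) = Blue"
    using dual.blue_of_card_less by blast
  then show ?thesis using dual_coloring_compl[OF assms(1)] by (simp add: swap_color_eq_iff)
qed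

end

lemma not_rrbb_free: "\<not> rrbb_free n col"
proof
  assume "rrbb_free n col"
  then interpret rrbb_free n col .
  define c where "c = {0..<n}"
  have c: "c \<subseteq> {0..<2 * n}" "card c = n" by (auto simp: c_def)
  have "has_mono_Qn n (2 * n) col"
  proof (cases "col c")
    case Blue
    have "col S = Blue" if "S \<subseteq> c" for S
    proof (cases "S = c")
      case False
      then have "card S < n" using that c(2) psubset_card_mono[of c S] by (auto simp: c_def)
      then show ?thesis using blue_of_card_less that c(1) by blast
    qed (use Blue in simp)
    then show ?thesis using has_mono_Qn_of_interval[of "{}" c "2 * n" n col Blue] c by simp
  next
    case Red
    have "col S = Red" if "c \<subseteq> S" "S \<subseteq> {0..<2 * n}" for S
    proof (cases "S = c")
      case False
      then have "n < card S"
        using that c(2) psubset_card_mono[of S c] finite_subset[OF that(2)] by auto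
      then show ?thesis using red_of_card_greater that(2) by blast
    qed (use Red in simp)
    moreover have "card ({0..<2 * n} - c) = n" using c by (simp add: card_Diff_subset finite_subset)
    ultimately show ?thesis using has_mono_Qn_of_interval[of c "{0..<2 * n}" "2 * n" n col Red] c
      by simp
  qed
  then show False using no_mono_Qn by blast
qed

lemma EH_prop_Q2_rrbb: "EH_prop Q2_rrbb n (2 * n)"
  using not_rrbb_free EH_prop_iff unfolding rrbb_free_def by blast

section \<open>The pattern rbbb\<close>

lemma ex_first_difference:
  assumes "xs \<noteq> ys" "length xs = length ys"
  obtains i where "i < length xs" "take i xs = take i ys" "xs ! i \<noteq> ys ! i"
proof -
  have "\<exists>i<length xs. xs ! i \<noteq> ys ! i" using assms nth_equalityI by blast
  then obtain i where i: "i < length xs" "xs ! i \<noteq> ys ! i" "\<And>j. j < i \<Longrightarrow> xs ! j = ys ! j"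
    using exists_least_iff[of "\<lambda>i. i < length xs \<and> xs ! i \<noteq> ys ! i"]
    by (metis (no_types, lifting) order.strict_trans)
  have "take i xs = take i ys" by (rule nth_equalityI) (use i assms in auto)
  then show ?thesis using i that by blast
qed

lemma prefix_sets_incomparable:
  assumes xs: "xs \<in> permutations_of_set X" and ys: "ys \<in> permutations_of_set X" and "xs \<noteq> ys"
  obtains i where "i < card X" "\<not> set (take (Suc i) xs) \<subseteq> set (take (Suc i) ys)"
    "\<not> set (take (Suc i) ys) \<subseteq> set (take (Suc i) xs)"
proof -
  have len: "length xs = card X" "length ys = card X"
    using xs ys by (auto intro: length_finite_permutations_of_set)
  obtain i where i: "i < card X" "take i xs = take i ys" "xs ! i \<noteq> ys ! i"
    using ex_first_difference[OF \<open>xs \<noteq> ys\<close>] len by metis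
  have "distinct (take (Suc i) xs)" "distinct (take (Suc i) ys)"
    using xs ys by (auto dest: permutations_of_setD)
  then have "xs ! i \<notin> set (take i xs)" "ys ! i \<notin> set (take i ys)"
    using i(1) len by (simp_all add: take_Suc_conv_app_nth)
  then show ?thesis
    using that[OF i(1)] i(2,3) i(1) len by (simp add: take_Suc_conv_app_nth)
qed

lemma rbbb_copy_of_staircases:
  assumes R: "col R = Red" and disj: "R \<inter> X = {}" "Y \<inter> X = {}" and range: "R \<union> Y \<union> X \<subseteq> {0..<N}"
    and xs: "xs \<in> permutations_of_set X" and ys: "ys \<in> permutations_of_set X" and "xs \<noteq> ys"
    and B: "\<forall>j\<le>card X. B j \<subseteq> Y" "blue_staircase col R (\<lambda>j. set (take j xs)) B (card X)"
    and C: "\<forall>j\<le>card X. C j \<subseteq> Y" "blue_staircase col R (\<lambda>j. set (take j ys)) C (card X)"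
    and top: "B (card X) = C (card X)"
  shows "has_colored_copy Q2_rbbb N col"
proof -
  let ?k = "card X"
  obtain i where i: "i < ?k" and inc: "\<not> set (take (Suc i) xs) \<subseteq> set (take (Suc i) ys)"
    "\<not> set (take (Suc i) ys) \<subseteq> set (take (Suc i) xs)"
    using prefix_sets_incomparable[OF xs ys \<open>xs \<noteq> ys\<close>] by blast
  have set_xs: "set xs = X" "length xs = ?k" and set_ys: "set ys = X"
    using xs ys by (auto dest: permutations_of_setD intro: length_finite_permutations_of_set)
  have prefix_X: "set (take j xs) \<subseteq> X" "set (take j ys) \<subseteq> X" for j
    using set_take_subset[of j xs] set_take_subset[of j ys] set_xs set_ys by auto
  define b where "b = R \<union> B (Suc i) \<union> set (take (Suc i) xs)"
  define c where "c = R \<union> C (Suc i) \<union> set (take (Suc i) ys)"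
  define d where "d = R \<union> B ?k \<union> X"
  have BY: "B (Suc i) \<subseteq> Y" "C (Suc i) \<subseteq> Y" "B ?k \<subseteq> Y" using B(1) C(1) i by auto
  have "b \<inter> X = set (take (Suc i) xs)" "c \<inter> X = set (take (Suc i) ys)"
    using disj BY prefix_X[of "Suc i"] by (auto simp: b_def c_def)
  then have bc: "\<not> b \<subseteq> c" "\<not> c \<subseteq> b" using inc by blast+
  have "B (Suc i) \<subseteq> B ?k" "C (Suc i) \<subseteq> C ?k"
    using B(2) C(2) i unfolding blue_staircase_def by auto
  then have "b \<subseteq> d" "c \<subseteq> d"
    using prefix_X[of "Suc i"] top by (auto simp: b_def c_def d_def)
  moreover have "d \<subseteq> {0..<N}" using range BY(3) by (auto simp: d_def)
  moreover have "col b = Blue" "col c = Blue" "col d = Blue"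
    using B(2) C(2) i set_xs unfolding blue_staircase_def by (auto simp: b_def c_def d_def)
  ultimately show ?thesis
    using has_colored_copy_of_sets[of R b c d N col Q2_rbbb] bc R
    by (auto simp: b_def c_def Q2_rbbb_def)
qed

lemma not_copy_free_Q2_rbbb:
  assumes "2 ^ n < (fact k :: nat)"
  shows "\<not> copy_free_coloring Q2_rbbb n (2 * n + k) col"
proof
  assume "copy_free_coloring Q2_rbbb n (2 * n + k) col"
  then interpret copy_free_coloring Q2_rbbb n "2 * n + k" col .
  define Y where "Y = {n..<2 * n}"
  define X where "X = {2 * n..<2 * n + k}"
  have YX: "finite Y" "card Y = n" "card X = k" "Y \<inter> X = {}" by (auto simp: Y_def X_def)
  obtain R where R: "R \<subseteq> {0..<n}" "col R = Red"
    by (rule interval_has_colour[of "{}" "{0..<n}" Red]) auto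
  have RYX: "R \<inter> Y = {}" "R \<inter> X = {}" "R \<union> Y \<union> X \<subseteq> {0..<2 * n + k}"
    using R(1) by (auto simp: Y_def X_def)
  have "\<forall>xs\<in>permutations_of_set X. has_blue_staircase col R (\<lambda>j. set (take j xs)) Y k"
  proof
    fix xs assume xs: "xs \<in> permutations_of_set X"
    have prefix_X: "set (take j xs) \<subseteq> X" for j
      using set_take_subset[of j xs] xs by (auto dest: permutations_of_setD)
    have "has_mono_Qn n (2 * n + k) col \<or> has_blue_staircase col R (\<lambda>j. set (take j xs)) Y k"
    proof (rule has_mono_Qn_or_blue_staircase)
      show "set (take i xs) \<subseteq> set (take j xs)" if "i \<le> j" for i j
        using set_take_subset_set_take[OF that] .
      show "set (take i xs) \<inter> Y = {}" for i
        using prefix_X[of i] YX(4) by blast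
      show "R \<union> Y \<union> set (take k xs) \<subseteq> {0..<2 * n + k}"
        using prefix_X[of k] RYX(3) by blast
    qed (use YX RYX in auto)
    then show "has_blue_staircase col R (\<lambda>j. set (take j xs)) Y k"
      using no_mono_Qn by blast
  qed
  then have "\<forall>xs\<in>permutations_of_set X.
      \<exists>B. (\<forall>j\<le>k. B j \<subseteq> Y) \<and> blue_staircase col R (\<lambda>j. set (take j xs)) B k"
    unfolding has_blue_staircase_def .
  from bchoice[OF this] obtain stair where stair: "\<forall>xs\<in>permutations_of_set X.
      (\<forall>j\<le>k. stair xs j \<subseteq> Y) \<and> blue_staircase col R (\<lambda>j. set (take j xs)) (stair xs) k"
    by blast
  have "\<not> inj_on (\<lambda>xs. stair xs k) (permutations_of_set X)"
  proof
    assume "inj_on (\<lambda>xs. stair xs k) (permutations_of_set X)"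
    moreover have "(\<lambda>xs. stair xs k) ` permutations_of_set X \<subseteq> Pow Y" using stair by blast
    ultimately have "card (permutations_of_set X) \<le> card (Pow Y)"
      by (rule card_inj_on_le) (use YX(1) in simp)
    then show False using assms YX by (simp add: card_Pow X_def)
  qed
  then obtain xs ys where xs: "xs \<in> permutations_of_set X" and ys: "ys \<in> permutations_of_set X"
    and "xs \<noteq> ys" "stair xs k = stair ys k"
    unfolding inj_on_def by blast
  have "has_colored_copy Q2_rbbb (2 * n + k) col"
    by (rule rbbb_copy_of_staircases[of col R X Y "2 * n + k" xs ys "stair xs" "stair ys"])
      (use R(2) RYX YX stair xs ys \<open>xs \<noteq> ys\<close> \<open>stair xs k = stair ys k\<close> in simp_all)
  then show False using no_colored_copy by blast
qed

lemma EH_prop_Q2_rbbb: "2 ^ n < (fact k :: nat) \<Longrightarrow> EH_prop Q2_rbbb n (2 * n + k)"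
  using not_copy_free_Q2_rbbb EH_prop_iff by blast

section \<open>Erdos--Hajnal numbers\<close>

lemma not_EH_prop_Q2_below_double:
  assumes "N < 2 * n"
  shows "\<not> EH_prop Q2_brbb n N" "\<not> EH_prop Q2_brrb n N" "\<not> EH_prop Q2_rrbb n N"
    "\<not> EH_prop Q2_rbbb n N"
proof -
  have QN: "{} \<in> QN 2" "{0} \<in> QN 2" "{0, 1} \<in> QN 2" by (auto simp: QN_def)
  show "\<not> EH_prop Q2_brbb n N" "\<not> EH_prop Q2_brrb n N"
    by (rule not_EH_prop_below_double[OF assms QN(2,3)]; simp add: Q2_brbb_def Q2_brrb_def)+
  show "\<not> EH_prop Q2_rrbb n N" "\<not> EH_prop Q2_rbbb n N"
    by (rule not_EH_prop_below_double[OF assms QN(1,3)]; simp add: Q2_rrbb_def Q2_rbbb_def)+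
qed

lemma ex_EH_prop_Q2_rbbb: "\<exists>N. EH_prop Q2_rbbb n N"
proof -
  have "2 ^ n < Suc (2 ^ n)" by simp
  also have "\<dots> \<le> fact (Suc (2 ^ n))" by (rule fact_ge_self)
  finally show ?thesis using EH_prop_Q2_rbbb by blast
qed

lemma power_le_fact_add: "m ^ j \<le> (fact (m + j) :: nat)"
proof (induction j)
  case (Suc j)
  have "m ^ Suc j = m * m ^ j" by simp
  also have "\<dots> \<le> Suc (m + j) * fact (m + j)" using Suc by (intro mult_mono) auto
  also have "\<dots> = fact (m + Suc j)" by simp
  finally show ?case .
qed simp

text \<open>From \<open>ln x \<le> 2 \<surd>x\<close> one gets \<open>m \<ge> \<surd>n\<close>, hence
  \<open>m ln m \<ge> (2n / ln n) (ln n / 2) = n > n ln 2\<close>.\<close>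
lemma two_power_less_self_power:
  fixes n m :: nat
  assumes n: "2 \<le> n" and m: "2 * real n / ln (real n) \<le> real m"
  shows "2 ^ n < m ^ m"
proof -
  define x where "x = real n"
  have x: "2 \<le> x" "0 < ln x" "0 < sqrt x" using n by (auto simp: x_def)
  have "ln (sqrt x) \<le> sqrt x - 1" using x by (intro ln_le_minus_one) simp
  then have "ln x \<le> 2 * sqrt x" using ln_sqrt[of x] x by simp
  then have "sqrt x * ln x \<le> sqrt x * (2 * sqrt x)" by (rule mult_left_mono) (use x in simp)
  also have "\<dots> = 2 * x" using x by simp
  finally have "sqrt x \<le> 2 * x / ln x" using x by (simp add: pos_le_divide_eq)
  then have sqrt_le: "sqrt x \<le> real m" using m by (simp add: x_def)
  then have m_pos: "0 < real m" using x(3) by linarith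
  have "ln (sqrt x) \<le> ln (real m)" using sqrt_le x(3) m_pos by simp
  then have ln_le: "ln x / 2 \<le> ln (real m)" using ln_sqrt[of x] x by simp
  have "x = 2 * x / ln x * (ln x / 2)" using x by simp
  also have "\<dots> \<le> real m * ln (real m)"
  proof (rule mult_mono)
    show "2 * x / ln x \<le> real m" using m by (simp add: x_def)
    show "0 \<le> ln x / 2" using x by simp
  qed (use ln_le m_pos in simp_all)
  finally have "x \<le> real m * ln (real m)" .
  moreover have "x * ln 2 < x" using ln_2_less_1 x by simp
  ultimately have "ln (2 ^ n) < ln (real m ^ m)"
    using m_pos by (simp add: ln_realpow x_def)
  then have "real (2 ^ n) < real (m ^ m)" using m_pos by simp
  then show ?thesis by (simp only: of_nat_less_iff)
qed

lemma EH_number_Q2_rbbb_le: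
  assumes "2 \<le> n"
  shows "real (EH_number Q2_rbbb n) - 2 * real n \<le> 6 * (real n / ln (real n))"
proof -
  define m where "m = nat \<lceil>2 * real n / ln (real n)\<rceil>"
  have "0 < 2 * real n / ln (real n)" using assms by simp
  then have m: "2 * real n / ln (real n) \<le> real m" "real m \<le> 2 * real n / ln (real n) + 1"
    unfolding m_def by linarith+
  have "2 ^ n < m ^ m" by (rule two_power_less_self_power[OF assms m(1)])
  also have "\<dots> \<le> fact (2 * m)" using power_le_fact_add[of m m] by (simp add: mult_2)
  finally have "EH_number Q2_rbbb n \<le> 2 * n + 2 * m"
    by (intro EH_number_le EH_prop_Q2_rbbb)
  then have "real (EH_number Q2_rbbb n) \<le> real (2 * n + 2 * m)" by (simp only: of_nat_le_iff)
  moreover have "1 \<le> real n / ln (real n)" using ln_bound[of "real n"] assms by simp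
  moreover have "2 * real n / ln (real n) = 2 * (real n / ln (real n))" by simp
  ultimately show ?thesis using m(2) by simp
qed

lemma EH_number_Q2_rbbb_bigo:
  "(\<lambda>n. real (EH_number Q2_rbbb n) - 2 * real n) \<in> O(\<lambda>n. real n / ln (real n))"
proof (rule bigoI[of _ 6])
  show "\<forall>\<^sub>F n in at_top.
    norm (real (EH_number Q2_rbbb n) - 2 * real n) \<le> 6 * norm (real n / ln (real n))"
    unfolding eventually_at_top_linorder
  proof (intro exI allI impI)
    fix n :: nat assume n: "2 \<le> n"
    have "2 * n \<le> EH_number Q2_rbbb n"
      using EH_number_ge[OF _ not_EH_prop_Q2_below_double(4)] ex_EH_prop_Q2_rbbb by blast
    moreover have "0 < ln (real n)" "ln (real n) \<le> real n" using ln_bound[of "real n"] n by simp_all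
    ultimately show "norm (real (EH_number Q2_rbbb n) - 2 * real n) \<le> 6 * norm (real n / ln (real n))"
      using EH_number_Q2_rbbb_le[OF n] by simp
  qed
qed

theorem theorem7:
  shows "(\<forall>n::nat. n \<ge> 1 \<longrightarrow>
            EH_number Q2_brbb n = 2 * n \<and>
            EH_number Q2_brrb n = 2 * n \<and>
            EH_number Q2_rrbb n = 2 * n \<and>
            (\<exists>N. EH_prop Q2_rbbb n N) \<and>
            2 * n \<le> EH_number Q2_rbbb n)
       \<and> (\<lambda>n::nat. real (EH_number Q2_rbbb n) - 2 * real n) \<in> O(\<lambda>n. real n / ln (real n))"
proof (intro conjI allI impI)
  fix n :: nat
  show "EH_number Q2_brbb n = 2 * n"
    using EH_number_eqI[OF EH_prop_Q2_brbb] not_EH_prop_Q2_below_double(1) by blast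
  show "EH_number Q2_brrb n = 2 * n"
    using EH_number_eqI[OF EH_prop_Q2_brrb] not_EH_prop_Q2_below_double(2) by blast
  show "EH_number Q2_rrbb n = 2 * n"
    using EH_number_eqI[OF EH_prop_Q2_rrbb] not_EH_prop_Q2_below_double(3) by blast
  show "\<exists>N. EH_prop Q2_rbbb n N" by (rule ex_EH_prop_Q2_rbbb)
  then show "2 * n \<le> EH_number Q2_rbbb n"
    using EH_number_ge not_EH_prop_Q2_below_double(4) by blast
qed (rule EH_number_Q2_rbbb_bigo)

end
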